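(* Let $S\subset\mathbb{R}^q$ be compact and $\ell:\mathbb{R}^q\times\mathbb{R}^q\to(0,1)$ continuous. Let $s\in S$ and let $(\xi_k)_{k\in\mathbb{N}}\subset\mathbb{R}^q$ be $n$-periodic for some $n\in\mathbb{N}$, i.e. $\xi_{k+n}=\xi_k$ for all $k$. Let $d_1,d_2,\dots\in\{0,1\}$ be independent random variables with $\Pr(d_k=1)=\ell(s,\xi_k)$. Let $c_1,\dots,c_M\in S$ be distinct, let $\hat p_0:\{1,\dots,M\}\to(0,1)$ with $\sum_i\hat p_0(i)=1$, and define $\hat p_k$ by $$\hat p_k(i\mid d_{1:k};\xi_{1:k})=\frac{g(d_k\mid c_i;\xi_k)\,\hat p_{k-1}(i\mid d_{1:k-1};\xi_{1:k-1})}{\sum_{j=1}^M g(d_k\mid c_j;\xi_k)\,\hat p_{k-1}(j\mid d_{1:k-1};\xi_{1:k-1})},$$ where $g(d\mid x;\xi)=\ell(x,\xi)^d(1-\ell(x,\xi))^{1-d}$. Let $$\mathcal{O}=\{i\in\{1,\dots,M\}: \hat p_k(i\mid d_{1:k};\xi_{1:k})\to 0 \text{ almost surely as } k\to\infty\},$$ and for $x\in\mathbb{R}^q$ let $$K(s\|x;\xi_{1:n})=\sum_{k=1}^n\Big[\ell(s,\xi_k)\ln\frac{\ell(s,\xi_k)}{\ell(x,\xi_k)}+(1-\ell(s,\xi_k))\ln\frac{1-\ell(s,\xi_k)}{1-\ell(x,\xi_k)}\Big].$$ Then $$\{1,\dots,M\}\setminus\mathcal{O}\subset\operatorname*{ar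gmin}_{i\in\{1,\dots,M\}}K(s\|c_i;\xi_{1:n}).$$
   Context: $K(s\|x;\xi_{1:n})$ is the Kullback–Leibler divergence between the joint distribution of $n$ independent binary measurements at $\xi_1,\dots,\xi_n$ with source at $s$ and the one with source at $x$. *)

theory Defs
  imports "HOL-Probability.Probability"
begin

definition lik :: "('a \<Rightarrow> 'a \<Rightarrow> real) \<Rightarrow> bool \<Rightarrow> 'a \<Rightarrow> 'a \<Rightarrow> real" where
  "lik L d x \<xi> = (if d then L x \<xi> else 1 - L x \<xi>)"

fun post :: "('a \<Rightarrow> 'a \<Rightarrow> real) \<Rightarrow> (nat \<Rightarrow> 'a) \<Rightarrow> nat \<Rightarrow> (nat \<Rightarrow> real) \<Rightarrow> (nat \<Rightarrow> 'a)
              \<Rightarrow> (nat \<Rightarrow> bool) \<Rightarrow> nat \<Rightarrow> nat \<Rightarrow> real" where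
  "post L c M p0 \<xi> d 0 i = p0 i"
| "post L c M p0 \<xi> d (Suc k) i =
     lik L (d (Suc k)) (c i) (\<xi> (Suc k)) * post L c M p0 \<xi> d k i /
     (\<Sum>j=1..M. lik L (d (Suc k)) (c j) (\<xi> (Suc k)) * post L c M p0 \<xi> d k j)"

definition KL :: "('a \<Rightarrow> 'a \<Rightarrow> real) \<Rightarrow> 'a \<Rightarrow> 'a \<Rightarrow> (nat \<Rightarrow> 'a) \<Rightarrow> nat \<Rightarrow> real" where
  "KL L s x \<xi> n = (\<Sum>k=1..n. L s (\<xi> k) * ln (L s (\<xi> k) / L x (\<xi> k))
        + (1 - L s (\<xi> k)) * ln ((1 - L s (\<xi> k)) / (1 - L x (\<xi> k))))"

end

theory Submission
  imports Defs "HOL-Real_Asymp.Real_Asymp"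
begin

text \<open>If K(s || c j) < K(s || c i), write the posterior odds of c i against c j as the prior odds
  times the likelihood ratio, i.e. the exponential of a sum of independent, uniformly bounded
  log-likelihood ratios Z m. Over one period of the sensor positions their means add up to
  K(s || c j) - K(s || c i) < 0, so the mean of the partial sums decreases linearly in k.
  Hoeffding's inequality bounds the probability of an upward deviation by a fixed fraction of
  that drift geometrically in k, and Borel-Cantelli turns this into an almost sure bound for all
  large k. Hence the posterior of c i tends to 0 almost surely, so every candidate whose
  posterior does not vanish almost surely minimises the divergence.\<close>

lemma periodic_add_mult:
  fixes g :: "nat \<Rightarrow> 'b" and n :: nat
  assumes "\<And>k. g (k + n) = g k"
  shows "g (m + q * n) = g m"
proof (induction q)
  case (Suc q)
  then show ?case using assms[of "m + q * n"] by (simp add: ac_simps)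
qed simp

lemma periodic_mod:
  fixes g :: "nat \<Rightarrow> 'b" and n :: nat
  assumes "\<And>k. g (k + n) = g k"
  shows "g m = g (m mod n)"
  using periodic_add_mult[of g n "m mod n" "m div n", OF assms] by (simp add: add.commute)

lemma periodic_bounded:
  fixes g :: "nat \<Rightarrow> 'b::finite \<Rightarrow> real"
  assumes "\<And>k b. g (k + n) b = g k b" and "n > 0"
  obtains B where "\<And>m b. \<bar>g m b\<bar> \<le> B"
proof
  fix m b
  have "\<bar>g (m mod n) b\<bar> \<le> (\<Sum>b'\<in>UNIV. \<bar>g (m mod n) b'\<bar>)"
    by (rule member_le_sum) auto
  also have "\<dots> \<le> (\<Sum>r<n. \<Sum>b'\<in>UNIV. \<bar>g r b'\<bar>)"
    by (rule member_le_sum) (use \<open>n > 0\<close> in \<open>auto intro: sum_nonneg\<close>)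
  finally show "\<bar>g m b\<bar> \<le> (\<Sum>r<n. \<Sum>b'\<in>UNIV. \<bar>g r b'\<bar>)"
    using periodic_mod[of "\<lambda>k. g k b" n m] assms(1) by simp
qed

lemma sum_atLeast1_atMost_add:
  fixes e :: "nat \<Rightarrow> 'b::comm_monoid_add"
  shows "(\<Sum>m=1..a + r. e m) = (\<Sum>m=1..a. e m) + (\<Sum>m=1..r. e (m + a))"
  using sum.ub_add_nat[of 1 a e r] sum.shift_bounds_cl_nat_ivl[of e 1 a r]
  by (simp add: add.commute)

lemma sum_periodic_div_mod:
  fixes e :: "nat \<Rightarrow> 'b::comm_semiring_1"
  assumes per: "\<And>k. e (k + n) = e k"
  shows "(\<Sum>m=1..k. e m) = of_nat (k div n) * (\<Sum>m=1..n. e m) + (\<Sum>m=1..k mod n. e m)"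
proof -
  have shift: "e (m + q * n) = e m" for m q by (rule periodic_add_mult[of e n, OF per])
  have shift': "e (m + n * q) = e m" for m q by (metis shift mult.commute)
  have full: "(\<Sum>m=1..q * n. e m) = of_nat q * (\<Sum>m=1..n. e m)" for q
  proof (induction q)
    case (Suc q)
    have "(\<Sum>m=1..Suc q * n. e m) = (\<Sum>m=1..q * n. e m) + (\<Sum>m=1..n. e (m + q * n))"
      using sum_atLeast1_atMost_add[of e "q * n" n] by (simp add: add.commute)
    then show ?case using Suc by (simp add: shift' algebra_simps)
  qed simp
  have "(\<Sum>m=1..k. e m) = (\<Sum>m=1..(k div n) * n + k mod n. e m)" by simp
  also have "\<dots> = of_nat (k div n) * (\<Sum>m=1..n. e m) + (\<Sum>m=1..k mod n. e m)"
    by (simp only: sum_atLeast1_atMost_add full shift)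
  finally show ?thesis .
qed

lemma sum_periodic_le_linear:
  fixes e :: "nat \<Rightarrow> real"
  assumes per: "\<And>k. e (k + n) = e k" and "n > 0" and nonpos: "(\<Sum>m=1..n. e m) \<le> 0"
  shows "(\<Sum>m=1..k. e m)
           \<le> (\<Sum>m=1..n. \<bar>e m\<bar>) - (\<Sum>m=1..n. e m) + (\<Sum>m=1..n. e m) / n * k"
proof -
  have "(\<Sum>m=1..k mod n. e m) \<le> (\<Sum>m=1..k mod n. \<bar>e m\<bar>)" by (rule sum_mono) simp
  also have "\<dots> \<le> (\<Sum>m=1..n. \<bar>e m\<bar>)"
    using \<open>n > 0\<close> by (intro sum_mono2) (auto simp: less_imp_le)
  finally have rest: "(\<Sum>m=1..k mod n. e m) \<le> (\<Sum>m=1..n. \<bar>e m\<bar>)" .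
  have "real k < (real (k div n) + 1) * n"
    using dividend_less_div_times[OF \<open>n > 0\<close>, of k] of_nat_less_iff
    by (simp add: algebra_simps flip: of_nat_mult of_nat_add)
  then have "real k / n - 1 \<le> real (k div n)" using \<open>n > 0\<close> by (simp add: field_simps)
  then have "real (k div n) * (\<Sum>m=1..n. e m) \<le> (real k / n - 1) * (\<Sum>m=1..n. e m)"
    using nonpos by (rule mult_right_mono_neg)
  then show ?thesis
    using sum_periodic_div_mod[of e n k, OF per] rest by (simp add: algebra_simps)
qed

lemma (in prob_space) expectation_fun_bool:
  fixes f :: "bool \<Rightarrow> real"
  assumes "D \<in> measurable M (count_space UNIV)"
  shows "expectation (\<lambda>x. f (D x))
           = prob {x\<in>space M. D x} * f True + (1 - prob {x\<in>space M. D x}) * f False"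
proof -
  define A where "A = {x\<in>space M. D x}"
  have A: "A \<in> events"
    using measurable_sets[OF assms, of "{True}"] by (simp add: A_def vimage_def Int_def conj_commute)
  have "expectation (\<lambda>x. f (D x)) = expectation (\<lambda>x. f False + (f True - f False) * indicator A x)"
    by (rule Bochner_Integration.integral_cong) (auto simp: indicator_def A_def)
  also have "\<dots> = f False + (f True - f False) * prob A"
    using A by (simp add: integrable_real_indicator emeasure_eq_measure prob_space)
  finally show ?thesis by (simp add: A_def algebra_simps)
qed

lemma (in prob_space) prob_partial_sum_ge_le_geometric:
  fixes Z :: "nat \<Rightarrow> 'a \<Rightarrow> real" and \<epsilon> :: real
  assumes indep: "indep_vars (\<lambda>_. borel) Z {1..}"
    and bound: "\<And>m x. m \<ge> 1 \<Longrightarrow> x \<in> space M \<Longrightarrow> \<bar>Z m x\<bar> \<le> B"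
    and "B > 0" "\<epsilon> \<ge> 0" "k \<ge> 1"
  shows "prob {x\<in>space M. (\<Sum>m=1..k. Z m x) \<ge> (\<Sum>m=1..k. expectation (Z m)) + \<epsilon> * k}
           \<le> exp (- \<epsilon>\<^sup>2 / (2 * B\<^sup>2)) ^ k"
proof -
  interpret Hoeffding_ineq M "{1..k}" Z "\<lambda>_. - B" "\<lambda>_. B" "\<Sum>m=1..k. expectation (Z m)"
  proof unfold_locales
    show "indep_vars (\<lambda>_. borel) Z {1..k}" by (rule indep_vars_subset[OF indep]) auto
    show "AE x in M. Z m x \<in> {- B..B}" if "m \<in> {1..k}" for m
      using bound that by (intro AE_I2) (force simp: abs_le_iff)
  qed simp_all
  have "prob {x\<in>space M. (\<Sum>m=1..k. Z m x) \<ge> (\<Sum>m=1..k. expectation (Z m)) + \<epsilon> * k}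
          \<le> exp (-2 * (\<epsilon> * k)\<^sup>2 / (\<Sum>m=1..k. (B - - B)\<^sup>2))"
    using Hoeffding_ineq_ge[of "\<epsilon> * k"] assms(3-5) by simp
  also have "-2 * (\<epsilon> * k)\<^sup>2 / (\<Sum>m=1..k. (B - - B)\<^sup>2) = real k * (- \<epsilon>\<^sup>2 / (2 * B\<^sup>2))"
    using assms(3,5) by (simp add: power2_eq_square field_simps)
  also have "exp (real k * (- \<epsilon>\<^sup>2 / (2 * B\<^sup>2))) = exp (- \<epsilon>\<^sup>2 / (2 * B\<^sup>2)) ^ k"
    by (rule exp_of_nat_mult)
  finally show ?thesis .
qed

lemma (in prob_space) AE_eventually_partial_sum_less:
  fixes Z :: "nat \<Rightarrow> 'a \<Rightarrow> real" and \<epsilon> :: real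
  assumes indep: "indep_vars (\<lambda>_. borel) Z {1..}"
    and bound: "\<And>m x. m \<ge> 1 \<Longrightarrow> x \<in> space M \<Longrightarrow> \<bar>Z m x\<bar> \<le> B"
    and "\<epsilon> > 0"
  shows "AE x in M. eventually (\<lambda>k. (\<Sum>m=1..k. Z m x) < (\<Sum>m=1..k. expectation (Z m)) + \<epsilon> * k)
           sequentially"
proof -
  \<comment> \<open>Hoeffding's inequality needs a nondegenerate range.\<close>
  define B' where "B' = max B 1"
  have B': "B' > 0" "\<And>m x. m \<ge> 1 \<Longrightarrow> x \<in> space M \<Longrightarrow> \<bar>Z m x\<bar> \<le> B'"
    using bound by (force simp: B'_def)+
  define A where
    "A k = {x\<in>space M. (\<Sum>m=1..k. Z m x) \<ge> (\<Sum>m=1..k. expectation (Z m)) + \<epsilon> * k}" for k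
  have [measurable]: "Z m \<in> borel_measurable M" if "m \<ge> 1" for m
    using indep that by (auto simp: indep_vars_def)
  have "A k \<in> events" for k unfolding A_def by measurable
  moreover have "summable (\<lambda>k. prob (A k))"
    by (rule summable_comparison_test'[where N=1, OF summable_geometric[of "exp (- \<epsilon>\<^sup>2 / (2 * B'\<^sup>2))"]])
       (use B' \<open>\<epsilon> > 0\<close> prob_partial_sum_ge_le_geometric[OF indep B'(2) B'(1)] in \<open>auto simp: A_def\<close>)
  ultimately have "AE x in M. eventually (\<lambda>k. x \<in> space M - A k) sequentially"
    by (intro borel_cantelli_AE1) (auto simp: emeasure_eq_measure)
  then show ?thesis
    by (rule AE_mp) (auto simp: A_def not_le elim: eventually_mono)
qed

lemma (in prob_space) AE_eventually_partial_sum_le_linear: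
  fixes Z :: "nat \<Rightarrow> 'a \<Rightarrow> real" and e :: "nat \<Rightarrow> real"
  assumes indep: "indep_vars (\<lambda>_. borel) Z {1..}"
    and bound: "\<And>m x. m \<ge> 1 \<Longrightarrow> x \<in> space M \<Longrightarrow> \<bar>Z m x\<bar> \<le> B"
    and mean: "\<And>m. m \<ge> 1 \<Longrightarrow> expectation (Z m) = e m"
    and per: "\<And>k. e (k + n) = e k" and neg: "(\<Sum>m=1..n. e m) < 0"
  obtains C \<epsilon> :: real where "\<epsilon> > 0"
    and "AE x in M. eventually (\<lambda>k. (\<Sum>m=1..k. Z m x) \<le> C - \<epsilon> * k) sequentially"
proof -
  define P where "P = (\<Sum>m=1..n. e m)"
  define C where "C = (\<Sum>m=1..n. \<bar>e m\<bar>) - P"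
  have "n > 0" using neg by (intro gr0I) simp
  define \<epsilon> where "\<epsilon> = - P / (2 * n)"
  have "\<epsilon> > 0" using neg \<open>n > 0\<close> by (simp add: \<epsilon>_def P_def divide_neg_pos)
  have mean_le: "(\<Sum>m=1..k. expectation (Z m)) + \<epsilon> * k \<le> C - \<epsilon> * k" for k
  proof -
    have "(\<Sum>m=1..k. expectation (Z m)) = (\<Sum>m=1..k. e m)" using mean by (intro sum.cong) auto
    also have "\<dots> \<le> C + P / n * k"
      using sum_periodic_le_linear[of e n, OF per \<open>n > 0\<close>] neg by (simp add: C_def P_def)
    also have "\<dots> = C - \<epsilon> * k - \<epsilon> * k"
      using \<open>n > 0\<close> by (simp add: \<epsilon>_def field_simps)
    finally show ?thesis by simp
  qed
  have "AE x in M. eventually (\<lambda>k. (\<Sum>m=1..k. Z m x) < (\<Sum>m=1..k. expectation (Z m)) + \<epsilon> * k)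
          sequentially"
    using bound by (rule AE_eventually_partial_sum_less[OF indep _ \<open>\<epsilon> > 0\<close>])
  then have "AE x in M. eventually (\<lambda>k. (\<Sum>m=1..k. Z m x) \<le> C - \<epsilon> * k) sequentially"
  proof (rule AE_mp, intro AE_I2 impI)
    fix x assume "eventually (\<lambda>k. (\<Sum>m=1..k. Z m x) < (\<Sum>m=1..k. expectation (Z m)) + \<epsilon> * k)
                    sequentially"
    then show "eventually (\<lambda>k. (\<Sum>m=1..k. Z m x) \<le> C - \<epsilon> * k) sequentially"
      by (rule eventually_mono) (smt (verit) mean_le)
  qed
  with \<open>\<epsilon> > 0\<close> show thesis by (rule that)
qed

lemma lik_pos: "(\<And>x y. 0 < L x y \<and> L x y < 1) \<Longrightarrow> 0 < lik L b x y"
  by (auto simp: lik_def)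

lemma post_pos_sum_eq_1:
  assumes L_range: "\<And>x y. 0 < L x y \<and> L x y < 1"
    and p0: "\<And>i. i \<in> {1..M} \<Longrightarrow> 0 < p0 i" and p0_sum: "(\<Sum>i=1..M. p0 i) = 1"
  shows "(\<forall>i\<in>{1..M}. 0 < post L c M p0 \<xi> D k i) \<and> (\<Sum>i=1..M. post L c M p0 \<xi> D k i) = 1"
proof (induction k)
  case 0
  then show ?case using p0 p0_sum by simp
next
  case (Suc k)
  define Z where "Z = (\<Sum>j=1..M. lik L (D (Suc k)) (c j) (\<xi> (Suc k)) * post L c M p0 \<xi> D k j)"
  have "M \<ge> 1" using p0_sum by (cases M) auto
  then have "Z > 0"
    unfolding Z_def using Suc lik_pos[of L, OF L_range] by (intro sum_pos) auto
  moreover have "(\<Sum>i=1..M. post L c M p0 \<xi> D (Suc k) i) = Z / Z"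
    by (simp add: Z_def flip: sum_divide_distrib)
  ultimately show ?case
    using Suc lik_pos[of L, OF L_range] by (auto simp: Z_def intro!: divide_pos_pos)
qed

lemma post_odds:
  "post L c M p0 \<xi> D k i * (p0 j * (\<Prod>m=1..k. lik L (D m) (c j) (\<xi> m)))
     = post L c M p0 \<xi> D k j * (p0 i * (\<Prod>m=1..k. lik L (D m) (c i) (\<xi> m)))"
proof (induction k)
  case (Suc k)
  then show ?case
    by (simp add: prod.cl_ivl_Suc field_simps)
qed simp

lemma post_le_likelihood_ratio:
  assumes L_range: "\<And>x y. 0 < L x y \<and> L x y < 1"
    and p0: "\<And>i. i \<in> {1..M} \<Longrightarrow> 0 < p0 i" and p0_sum: "(\<Sum>i=1..M. p0 i) = 1"
    and "i \<in> {1..M}" "j \<in> {1..M}"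
  shows "post L c M p0 \<xi> D k i
           \<le> p0 i / p0 j * (\<Prod>m=1..k. lik L (D m) (c i) (\<xi> m) / lik L (D m) (c j) (\<xi> m))"
proof -
  define Pi where "Pi = (\<Prod>m=1..k. lik L (D m) (c i) (\<xi> m))"
  define Pj where "Pj = (\<Prod>m=1..k. lik L (D m) (c j) (\<xi> m))"
  have pos: "Pi > 0" "Pj > 0" "p0 i > 0" "p0 j > 0"
    using lik_pos[of L, OF L_range] p0 assms(4,5) by (auto simp: Pi_def Pj_def intro!: prod_pos)
  have post_pos: "\<forall>l\<in>{1..M}. 0 < post L c M p0 \<xi> D k l"
    and post_sum: "(\<Sum>l=1..M. post L c M p0 \<xi> D k l) = 1"
    using post_pos_sum_eq_1[of L, OF L_range p0 p0_sum] by auto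
  have "post L c M p0 \<xi> D k j \<le> 1"
    using member_le_sum[of j "{1..M}" "post L c M p0 \<xi> D k"] post_pos post_sum assms(5)
    by (auto simp: less_imp_le)
  then have "post L c M p0 \<xi> D k j * (p0 i * Pi) / (p0 j * Pj) \<le> p0 i / p0 j * (Pi / Pj)"
    using pos by (simp add: divide_right_mono mult_left_le_one_le)
  moreover have "post L c M p0 \<xi> D k i * (p0 j * Pj) = post L c M p0 \<xi> D k j * (p0 i * Pi)"
    unfolding Pi_def Pj_def by (rule post_odds)
  then have "post L c M p0 \<xi> D k i = post L c M p0 \<xi> D k j * (p0 i * Pi) / (p0 j * Pj)"
    using pos by (simp add: field_simps)
  ultimately show ?thesis by (simp add: Pi_def Pj_def prod_dividef)
qed

lemma KL_diff_eq_sum_expected_log_lik_ratio: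
  assumes L_range: "\<And>x y. 0 < L x y \<and> L x y < 1"
  shows "(\<Sum>m=1..n. L s (\<xi> m) * ln (lik L True x (\<xi> m) / lik L True y (\<xi> m))
            + (1 - L s (\<xi> m)) * ln (lik L False x (\<xi> m) / lik L False y (\<xi> m)))
         = KL L s y \<xi> n - KL L s x \<xi> n"
proof -
  have pos: "0 < L a b" "L a b < 1" "0 < 1 - L a b" for a b using L_range[of a b] by auto
  show ?thesis
    unfolding KL_def lik_def by (simp add: ln_divide_pos pos sum_subtractf[symmetric] algebra_simps)
qed

lemma post_tendsto_0_if_log_lik_ratio_le_linear:
  fixes C \<epsilon> :: real
  assumes L_range: "\<And>x y. 0 < L x y \<and> L x y < 1"
    and p0: "\<And>i. i \<in> {1..M} \<Longrightarrow> 0 < p0 i" and p0_sum: "(\<Sum>i=1..M. p0 i) = 1"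
    and "i \<in> {1..M}" "j \<in> {1..M}" and "\<epsilon> > 0"
    and log_lik_ratio: "eventually (\<lambda>k.
          (\<Sum>m=1..k. ln (lik L (D m) (c i) (\<xi> m) / lik L (D m) (c j) (\<xi> m))) \<le> C - \<epsilon> * k)
          sequentially"
  shows "(\<lambda>k. post L c M p0 \<xi> D k i) \<longlonglongrightarrow> 0"
proof (rule tendsto_sandwich)
  show "eventually (\<lambda>k. 0 \<le> post L c M p0 \<xi> D k i) sequentially"
    using post_pos_sum_eq_1[of L, OF L_range p0 p0_sum] \<open>i \<in> {1..M}\<close> by (simp add: less_imp_le)
  show "eventually (\<lambda>k. post L c M p0 \<xi> D k i \<le> p0 i / p0 j * exp (C - \<epsilon> * k)) sequentially"
    using log_lik_ratio
  proof eventually_elim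
    case (elim k)
    have pos: "0 < lik L b x y" for b x y by (rule lik_pos[of L, OF L_range])
    have "post L c M p0 \<xi> D k i
            \<le> p0 i / p0 j * (\<Prod>m=1..k. lik L (D m) (c i) (\<xi> m) / lik L (D m) (c j) (\<xi> m))"
      by (rule post_le_likelihood_ratio[of L, OF L_range p0 p0_sum]) (use assms(4,5) in auto)
    also have "(\<Prod>m=1..k. lik L (D m) (c i) (\<xi> m) / lik L (D m) (c j) (\<xi> m))
                 = exp (\<Sum>m=1..k. ln (lik L (D m) (c i) (\<xi> m) / lik L (D m) (c j) (\<xi> m)))"
      by (simp add: exp_sum pos)
    also have "p0 i / p0 j * \<dots> \<le> p0 i / p0 j * exp (C - \<epsilon> * k)"
      using elim p0 \<open>i \<in> {1..M}\<close> \<open>j \<in> {1..M}\<close> by (intro mult_left_mono) (auto simp: less_imp_le)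
    finally show ?case .
  qed
  show "(\<lambda>k. p0 i / p0 j * exp (C - \<epsilon> * real k)) \<longlonglongrightarrow> 0"
    using \<open>\<epsilon> > 0\<close> by real_asymp
qed simp

lemma AE_eventually_log_lik_ratio_sum_le_linear:
  fixes L :: "'a \<Rightarrow> 'a \<Rightarrow> real" and d :: "nat \<Rightarrow> 'w \<Rightarrow> bool"
  assumes L_range: "\<And>x y. 0 < L x y \<and> L x y < 1"
    and per: "\<And>k. \<xi> (k + n) = \<xi> k"
    and "prob_space Mp"
    and indep: "prob_space.indep_vars Mp (\<lambda>_. count_space UNIV) d {1..}"
    and prob_d: "\<And>k. k \<ge> 1 \<Longrightarrow> measure Mp {\<omega> \<in> space Mp. d k \<omega>} = L s (\<xi> k)"
    and less: "KL L s y \<xi> n < KL L s x \<xi> n"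
  obtains C \<epsilon> :: real where "\<epsilon> > 0"
    and "AE \<omega> in Mp. eventually (\<lambda>k.
           (\<Sum>m=1..k. ln (lik L (d m \<omega>) x (\<xi> m) / lik L (d m \<omega>) y (\<xi> m))) \<le> C - \<epsilon> * k)
           sequentially"
proof -
  interpret prob_space Mp by fact
  define llr where "llr m b = ln (lik L b x (\<xi> m) / lik L b y (\<xi> m))" for m b
  define e where "e m = L s (\<xi> m) * llr m True + (1 - L s (\<xi> m)) * llr m False" for m
  have llr_per: "llr (k + n) b = llr k b" for k b by (simp add: llr_def per)
  have "n > 0" using less by (intro gr0I) (simp add: KL_def)
  obtain B where llr_bound: "\<And>m b. \<bar>llr m b\<bar> \<le> B"
    using periodic_bounded[of llr n, OF llr_per \<open>n > 0\<close>] by blast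
  have d_meas: "d m \<in> measurable Mp (count_space UNIV)" if "m \<ge> 1" for m
    using indep that by (auto simp: indep_vars_def)
  have indep_llr: "indep_vars (\<lambda>_. borel) (\<lambda>m \<omega>. llr m (d m \<omega>)) {1..}"
    by (rule indep_vars_compose2[OF indep]) simp
  have mean: "expectation (\<lambda>\<omega>. llr m (d m \<omega>)) = e m" if "m \<ge> 1" for m
    using expectation_fun_bool[OF d_meas[OF that], of "llr m"] prob_d[OF that] by (simp add: e_def)
  have e_per: "e (k + n) = e k" for k by (simp add: e_def llr_per per)
  have "(\<Sum>m=1..n. e m) = KL L s y \<xi> n - KL L s x \<xi> n"
    unfolding e_def llr_def by (rule KL_diff_eq_sum_expected_log_lik_ratio[OF L_range])
  then have e_sum: "(\<Sum>m=1..n. e m) < 0" using less by simp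
  have bound: "\<And>m \<omega>. m \<ge> 1 \<Longrightarrow> \<omega> \<in> space Mp \<Longrightarrow> \<bar>llr m (d m \<omega>)\<bar> \<le> B"
    by (rule llr_bound)
  obtain C \<epsilon> :: real where "\<epsilon> > 0"
    and "AE \<omega> in Mp. eventually (\<lambda>k. (\<Sum>m=1..k. llr m (d m \<omega>)) \<le> C - \<epsilon> * k) sequentially"
    by (rule AE_eventually_partial_sum_le_linear[OF indep_llr bound mean e_per e_sum])
  then show thesis by (intro that[of \<epsilon> C]) (simp_all add: llr_def)
qed

lemma post_tendsto_0_AE_if_KL_less:
  fixes L :: "'a \<Rightarrow> 'a \<Rightarrow> real" and d :: "nat \<Rightarrow> 'w \<Rightarrow> bool"
  assumes L_range: "\<And>x y. 0 < L x y \<and> L x y < 1"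
    and per: "\<And>k. \<xi> (k + n) = \<xi> k"
    and "prob_space Mp"
    and indep: "prob_space.indep_vars Mp (\<lambda>_. count_space UNIV) d {1..}"
    and prob_d: "\<And>k. k \<ge> 1 \<Longrightarrow> measure Mp {\<omega> \<in> space Mp. d k \<omega>} = L s (\<xi> k)"
    and p0: "\<And>i. i \<in> {1..M} \<Longrightarrow> 0 < p0 i" and p0_sum: "(\<Sum>i=1..M. p0 i) = 1"
    and ij: "i \<in> {1..M}" "j \<in> {1..M}"
    and less: "KL L s (c j) \<xi> n < KL L s (c i) \<xi> n"
  shows "AE \<omega> in Mp. (\<lambda>k. post L c M p0 \<xi> (\<lambda>k. d k \<omega>) k i) \<longlonglongrightarrow> 0"
proof -
  obtain C \<epsilon> :: real where "\<epsilon> > 0"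
    and "AE \<omega> in Mp. eventually (\<lambda>k.
           (\<Sum>m=1..k. ln (lik L (d m \<omega>) (c i) (\<xi> m) / lik L (d m \<omega>) (c j) (\<xi> m)))
             \<le> C - \<epsilon> * k) sequentially"
    by (rule AE_eventually_log_lik_ratio_sum_le_linear[OF L_range per assms(3) indep prob_d less])
  then show ?thesis
    by (elim AE_mp, intro AE_I2 impI
        post_tendsto_0_if_log_lik_ratio_le_linear[OF L_range p0 p0_sum ij \<open>\<epsilon> > 0\<close>])
      assumption
qed

theorem theorem4:
  fixes S :: "'a::euclidean_space set"
    and L :: "'a \<Rightarrow> 'a \<Rightarrow> real"
    and s :: 'a and \<xi> :: "nat \<Rightarrow> 'a" and n :: nat
    and Mp :: "'w measure" and d :: "nat \<Rightarrow> 'w \<Rightarrow> bool"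
    and M :: nat and c :: "nat \<Rightarrow> 'a" and p0 :: "nat \<Rightarrow> real"
  assumes "compact S"
    and "continuous_on UNIV (\<lambda>(x, y). L x y)"
    and "\<And>x y. 0 < L x y \<and> L x y < 1"
    and "s \<in> S"
    and "\<And>k. \<xi> (k + n) = \<xi> k"
    and "prob_space Mp"
    and "prob_space.indep_vars Mp (\<lambda>_. count_space UNIV) d {1..}"
    and "\<And>k. k \<ge> 1 \<Longrightarrow> measure Mp {\<omega> \<in> space Mp. d k \<omega>} = L s (\<xi> k)"
    and "inj_on c {1..M}"
    and "\<And>i. i \<in> {1..M} \<Longrightarrow> c i \<in> S"
    and "\<And>i. i \<in> {1..M} \<Longrightarrow> 0 < p0 i \<and> p0 i < 1"
    and "(\<Sum>i=1..M. p0 i) = 1"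
  shows "{1..M} - {i \<in> {1..M}. AE \<omega> in Mp.
             (\<lambda>k. post L c M p0 \<xi> (\<lambda>k. d k \<omega>) k i) \<longlonglongrightarrow> 0}
         \<subseteq> {i \<in> {1..M}. \<forall>j \<in> {1..M}. KL L s (c i) \<xi> n \<le> KL L s (c j) \<xi> n}"
proof (intro subsetI CollectI conjI ballI)
  fix i j assume i: "i \<in> {1..M} - {i \<in> {1..M}. AE \<omega> in Mp.
                     (\<lambda>k. post L c M p0 \<xi> (\<lambda>k. d k \<omega>) k i) \<longlonglongrightarrow> 0}"
    and j: "j \<in> {1..M}"
  show "KL L s (c i) \<xi> n \<le> KL L s (c j) \<xi> n"
  proof (rule ccontr)
    assume "\<not> ?thesis"
    then have "AE \<omega> in Mp. (\<lambda>k. post L c M p0 \<xi> (\<lambda>k. d k \<omega>) k i) \<longlonglongrightarrow> 0"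
      using i j assms(11) by (intro post_tendsto_0_AE_if_KL_less[of L, OF assms(3,5-8) _ assms(12)]) auto
    with i show False by blast
  qed
qed auto

end
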